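(* Let $p\in(0,1)$, $q=1-p$, $\lambda=p/q$, $\alpha\in(0,1)$. Let $J^B_0,J^B_1,\dots$ be i.i.d. with the discrete Mittag--Leffler distribution of type B, i.e. $J^B\overset{d}{=}1+\sum_{k=1}^{M-1}Z_k$ with $M$ geometric, $P(M=k)=pq^{k-1}$, independent of i.i.d. Sibuya$(\alpha)$ variables $Z_k$ ($P(Z=k)=(-1)^{k-1}\binom{\alpha}{k}$, $k\in\mathbb{N}$); equivalently $\mathbb{E}u^{J^B}=\dfrac{u}{1+\frac{q}{p}(1-u)^\alpha}$. Let $N_B(t)=\max\{n\in\mathbb{N}_0:J^B_0+\dots+J^B_{n-1}\le t\}$, $t\in\mathbb{N}_0$, and $p_k(t)=P(N_B(t)=k)$, with $p_k(t)=0$ for $t<0$. Then, with initial condition $p_k(0)=\delta_{0k}$, the state probabilities solve for $t\in\mathbb{N}_0$: $$(I-\mathcal{B})^\alpha p_k(t)=-\lambda p_k(t)+\lambda p_{k-1}(t-1),\quad k\ge1,$$ $$(I-\mathcal{B})^\alpha p_0(t)-(-1)^t\binom{\alpha-1}{t}=-\lambda p_0(t)+\lambda\delta_{0t}.$$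
   Context: $\mathcal{B}$ is the backward shift in time, $\mathcal{B}p(t)=p(t-1)$, and $(I-\mathcal{B})^\alpha p(t)=\sum_{k=0}^\infty\binom{\alpha}{k}(-1)^kp(t-k)$ is the fractional power of the discrete derivative. $\binom{x}{k}=x(x-1)\cdots(x-k+1)/k!$; $\delta$ is the Kronecker delta. *)

theory Defs
  imports "HOL-Probability.Probability"
begin

definition sibuya_pmf :: "real \<Rightarrow> nat pmf" where
  "sibuya_pmf a = embed_pmf (\<lambda>k. if k = 0 then 0 else (-1) ^ (k - 1) * (a gchoose k))"

fun iid_sum_pmf :: "nat pmf \<Rightarrow> nat \<Rightarrow> nat pmf" where
  "iid_sum_pmf D 0 = return_pmf 0"
| "iid_sum_pmf D (Suc n) = bind_pmf D (\<lambda>z. map_pmf (\<lambda>s. z + s) (iid_sum_pmf D n))"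

text \<open>Discrete Mittag-Leffler distribution of type B:
  J = 1 + Z_1 + ... + Z_(M-1), M geometric with P(M = k) = p q^(k-1), k >= 1,
  independent of the i.i.d. Sibuya(alpha) variables Z_k.
  Here M - 1 has law geometric_pmf p, i.e. P(M - 1 = m) = q^m p.\<close>
definition ml_B_pmf :: "real \<Rightarrow> real \<Rightarrow> nat pmf" where
  "ml_B_pmf p a = bind_pmf (geometric_pmf p)
      (\<lambda>m. map_pmf (\<lambda>s. 1 + s) (iid_sum_pmf (sibuya_pmf a) m))"

definition count_B :: "(nat \<Rightarrow> 'w \<Rightarrow> nat) \<Rightarrow> nat \<Rightarrow> 'w \<Rightarrow> nat" where
  "count_B J t w = (GREATEST n. (\<Sum>i<n. J i w) \<le> t)"

definition state_prob :: "'w measure \<Rightarrow> (nat \<Rightarrow> 'w \<Rightarrow> nat) \<Rightarrow> nat \<Rightarrow> int \<Rightarrow> real" where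
  "state_prob M J k t =
     (if t < 0 then 0 else measure M {w \<in> space M. count_B J (nat t) w = k})"

definition frac_diff :: "real \<Rightarrow> (int \<Rightarrow> real) \<Rightarrow> int \<Rightarrow> real" where
  "frac_diff a f t = (\<Sum>j. (a gchoose j) * (-1) ^ j * f (t - int j))"

end

theory Submission
  imports Defs "HOL-Computational_Algebra.Formal_Power_Series" "HOL-Real_Asymp.Real_Asymp"
begin

(* Pass to generating functions in t. Because every interarrival time is at least 1,
   P(N(t) = k) = P(S_k <= t) - P(S_(k+1) <= t) for the partial sums S_k, so
   sum_t p_k(t) u^t = d(u)^k (1 - d(u)) / (1 - u), where d is the generating function of J^B;
   and (I - B)^alpha acts on generating functions as multiplication by (1 - u)^alpha.
   Since J^B - 1 is a geometric sum of Sibuya variables, d(u) = p u / (1 - q S(u)) with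
   S(u) = 1 - (1 - u)^alpha, i.e. (1 - u)^alpha d = lambda (u - d). Substituting this into
   (1 - u)^alpha d^k (1 - d) / (1 - u) gives both equations; for k = 0 the extra term is the
   coefficient sequence of (1 - u)^alpha / (1 - u) = (1 - u)^(alpha - 1). *)

section \<open>The power series of the fractional difference operator\<close>

(* The series (1 - X)^a, through which (I - B)^a acts on generating functions. *)
definition fps_frac_diff :: "real \<Rightarrow> real fps" where
  "fps_frac_diff a = Abs_fps (\<lambda>n. (-1) ^ n * (a gchoose n))"

lemma one_minus_X_mult_fps_frac_diff: "(1 - fps_X) * fps_frac_diff (a - 1) = fps_frac_diff a"
proof (rule fps_ext)
  fix n
  show "fps_nth ((1 - fps_X) * fps_frac_diff (a - 1)) n = fps_nth (fps_frac_diff a) n"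
  proof (cases n)
    case (Suc m)
    have "a gchoose Suc m = ((a - 1) gchoose m) + ((a - 1) gchoose Suc m)"
      using gbinomial_Suc_Suc[of "a - 1" m] by simp
    then show ?thesis by (simp add: Suc fps_frac_diff_def algebra_simps)
  qed (simp add: fps_frac_diff_def algebra_simps)
qed

definition fps_of_int_seq :: "(int \<Rightarrow> 'a) \<Rightarrow> 'a fps" where
  "fps_of_int_seq f = Abs_fps (\<lambda>n. f (int n))"

lemma fps_of_int_seq_nth [simp]: "fps_nth (fps_of_int_seq f) n = f (int n)"
  by (simp add: fps_of_int_seq_def)

lemma frac_diff_eq_fps_nth:
  assumes "\<And>t. t < 0 \<Longrightarrow> f t = 0"
  shows "frac_diff a f (int t) = fps_nth (fps_frac_diff a * fps_of_int_seq f) t"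
proof -
  have "frac_diff a f (int t) = (\<Sum>j=0..t. (a gchoose j) * (-1) ^ j * f (int t - int j))"
    unfolding frac_diff_def by (rule suminf_finite) (auto simp: assms)
  also have "\<dots> = fps_nth (fps_frac_diff a * fps_of_int_seq f) t"
    unfolding fps_mult_nth
    by (intro sum.cong refl) (auto simp: fps_frac_diff_def of_nat_diff)
  finally show ?thesis .
qed

lemma fps_X_mult_fps_of_int_seq_nth:
  fixes f :: "int \<Rightarrow> 'a::comm_ring_1"
  assumes "f (-1) = 0"
  shows "fps_nth (fps_X * fps_of_int_seq f) t = f (int t - 1)"
  by (cases t) (simp_all add: assms)

lemma one_minus_X_mult_partial_sums:
  "(1 - fps_X) * Abs_fps (\<lambda>n. \<Sum>i\<le>n. fps_nth f i) = (f :: 'a::comm_ring_1 fps)"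
proof (rule fps_ext)
  fix n
  have "(1 - fps_X) * Abs_fps (\<lambda>n. \<Sum>i\<le>n. fps_nth f i)
      = Abs_fps (\<lambda>n. \<Sum>i\<le>n. fps_nth f i) - fps_X * Abs_fps (\<lambda>n. \<Sum>i\<le>n. fps_nth f i)"
    by (simp add: algebra_simps)
  then show "fps_nth ((1 - fps_X) * Abs_fps (\<lambda>n. \<Sum>i\<le>n. fps_nth f i)) n = fps_nth f n"
    by (cases n) (simp_all add: fps_X_mult_nth)
qed

section \<open>Probability generating functions\<close>

definition pmf_fps :: "nat pmf \<Rightarrow> real fps" where
  "pmf_fps D = Abs_fps (pmf D)"

lemma pmf_fps_nth [simp]: "fps_nth (pmf_fps D) n = pmf D n"
  by (simp add: pmf_fps_def)

lemma pmf_map_add: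
  fixes D :: "nat pmf"
  shows "pmf (map_pmf (\<lambda>s. z + s) D) n = (if z \<le> n then pmf D (n - z) else 0)"
proof -
  have "(\<lambda>s. z + s) -` {n} = (if z \<le> n then {n - z} else {})" by auto
  then show ?thesis by (simp add: pmf_map measure_pmf_single)
qed

lemma pmf_fps_map_Suc: "pmf_fps (map_pmf Suc D) = fps_X * pmf_fps D"
  by (rule fps_ext) (use pmf_map_add[of 1 D] in \<open>simp add: fps_X_mult_nth\<close>)

lemma pmf_fps_convolution:
  "pmf_fps (bind_pmf D (\<lambda>z. map_pmf (\<lambda>s. z + s) E)) = pmf_fps D * pmf_fps E"
proof (rule fps_ext)
  fix n
  have "pmf (bind_pmf D (\<lambda>z. map_pmf (\<lambda>s. z + s) E)) n
      = (\<integral>z. pmf (map_pmf (\<lambda>s. z + s) E) n \<partial>measure_pmf D)" by (rule pmf_bind)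
  also have "\<dots> = (\<Sum>z=0..n. pmf (map_pmf (\<lambda>s. z + s) E) n * pmf D z)"
    by (rule integral_measure_pmf_real) (auto simp: pmf_map_add split: if_splits)
  also have "\<dots> = (\<Sum>z=0..n. pmf D z * pmf E (n - z))"
    by (intro sum.cong) (auto simp: pmf_map_add)
  finally show "fps_nth (pmf_fps (bind_pmf D (\<lambda>z. map_pmf (\<lambda>s. z + s) E))) n
      = fps_nth (pmf_fps D * pmf_fps E) n"
    by (simp add: fps_mult_nth)
qed

lemma pmf_fps_iid_sum: "pmf_fps (iid_sum_pmf D m) = pmf_fps D ^ m"
proof (induction m)
  case 0
  show ?case by (rule fps_ext) (simp add: indicator_def)
next
  case (Suc m)
  then show ?case by (simp add: pmf_fps_convolution)
qed

lemma pmf_fps_compound: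
  assumes "pmf E 0 = 0"
  shows "pmf_fps (bind_pmf D (iid_sum_pmf E)) = pmf_fps D oo pmf_fps E"
proof (rule fps_ext)
  fix n
  have vanish: "pmf (iid_sum_pmf E m) n = 0" if "n < m" for m
  proof -
    have "fps_nth (pmf_fps (iid_sum_pmf E m)) n = 0"
      using startsby_zero_power_prefix[of "pmf_fps E" m] that assms by (simp add: pmf_fps_iid_sum)
    then show ?thesis by simp
  qed
  have "pmf (bind_pmf D (iid_sum_pmf E)) n = (\<integral>m. pmf (iid_sum_pmf E m) n \<partial>measure_pmf D)"
    by (rule pmf_bind)
  also have "\<dots> = (\<Sum>m=0..n. pmf (iid_sum_pmf E m) n * pmf D m)"
    by (rule integral_measure_pmf_real) (simp_all, meson vanish atLeastAtMost_iff le0 not_le)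
  finally show "fps_nth (pmf_fps (bind_pmf D (iid_sum_pmf E))) n
      = fps_nth (pmf_fps D oo pmf_fps E) n"
    by (simp add: fps_compose_nth mult.commute flip: pmf_fps_iid_sum)
qed

section \<open>The discrete Mittag-Leffler distribution of type B\<close>

(* (-1)^n ((a - 1) gchoose n) behaves like n powr (-a) / Gamma (1 - a). *)
lemma alternating_gbinomial_tendsto_zero:
  assumes "0 < a"
  shows "(\<lambda>n. (-1) ^ n * (((a::real) - 1) gchoose n)) \<longlonglongrightarrow> 0"
proof -
  define r where "r n = ((a - 1) gchoose n) * exp (a * ln (real n)) / (-1) ^ n" for n
  have "r \<longlonglongrightarrow> inverse (Gamma (1 - a))"
    using gbinomial_asymptotic[of "a - 1"] by (simp add: r_def[abs_def])
  moreover have "(\<lambda>n. exp (- a * ln (real n))) \<longlonglongrightarrow> 0"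
    using assms by real_asymp
  ultimately have "(\<lambda>n. r n * exp (- a * ln (real n))) \<longlonglongrightarrow> inverse (Gamma (1 - a)) * 0"
    by (rule tendsto_mult)
  moreover have "r n * exp (- a * ln (real n)) = (-1) ^ n * ((a - 1) gchoose n)" for n
    by (simp add: r_def exp_minus field_simps)
  ultimately show ?thesis by simp
qed

lemma sibuya_weight_nonneg:
  assumes "0 < a" "a < 1"
  shows "0 \<le> (-1) ^ (k - 1) * ((a::real) gchoose k)"
proof (cases k)
  case (Suc m)
  have "(-1) ^ (k - 1) * (a gchoose k)
      = (-1) ^ m * ((-1) ^ Suc m * pochhammer (-a) (Suc m) / fact (Suc m))"
    by (simp add: Suc gbinomial_pochhammer)
  also have "\<dots> = a * pochhammer (1 - a) m / fact (Suc m)"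
    by (simp add: pochhammer_rec power_mult_distrib[symmetric] algebra_simps)
  also have "\<dots> \<ge> 0"
    using assms by (intro divide_nonneg_nonneg mult_nonneg_nonneg pochhammer_nonneg) auto
  finally show ?thesis .
qed simp

lemma pmf_sibuya_pmf:
  assumes "0 < a" "a < 1"
  shows "pmf (sibuya_pmf a) k = (if k = 0 then 0 else (-1) ^ (k - 1) * (a gchoose k))"
proof -
  define f where "f k = (if k = 0 then 0 else (-1) ^ (k - 1) * (a gchoose k))" for k
  have f_alt: "f k = of_bool (k = 0) - (-1) ^ k * (a gchoose k)" for k
    by (cases k) (simp_all add: f_def)
  have "(\<Sum>k\<le>n. f k) = 1 - (-1) ^ n * ((a - 1) gchoose n)" for n
    using gbinomial_sum_lower_neg[of a n] by (simp add: f_alt sum_subtractf mult.commute)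
  then have "(\<lambda>n. \<Sum>k\<le>n. f k) \<longlonglongrightarrow> 1 - 0"
    by (simp only:) (intro tendsto_diff tendsto_const alternating_gbinomial_tendsto_zero assms)
  then have "f sums 1"
    by (simp add: sums_def LIMSEQ_lessThan_iff_atMost)
  moreover have "0 \<le> f k" for k
    using sibuya_weight_nonneg[OF assms] by (simp add: f_def)
  ultimately have "(\<integral>\<^sup>+k. ennreal (f k) \<partial>count_space UNIV) = 1"
    by (simp add: nn_integral_count_space_nat suminf_ennreal_eq sums_iff)
  then show ?thesis
    using \<open>\<And>k. 0 \<le> f k\<close> by (simp add: sibuya_pmf_def f_def[abs_def] pmf_embed_pmf)
qed

lemma pmf_fps_sibuya:
  assumes "0 < a" "a < 1"
  shows "pmf_fps (sibuya_pmf a) = 1 - fps_frac_diff a"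
proof (rule fps_ext)
  fix n
  show "fps_nth (pmf_fps (sibuya_pmf a)) n = fps_nth (1 - fps_frac_diff a) n"
    by (cases n) (simp_all add: pmf_sibuya_pmf[OF assms] fps_frac_diff_def)
qed

lemma pmf_fps_geometric:
  assumes "0 < p" "p \<le> 1"
  shows "pmf_fps (geometric_pmf p) * (1 - fps_const (1 - p) * fps_X) = fps_const p"
proof -
  have "pmf_fps (geometric_pmf p) * (1 - fps_const (1 - p) * fps_X)
      = pmf_fps (geometric_pmf p) - fps_const (1 - p) * (fps_X * pmf_fps (geometric_pmf p))"
    by (simp add: algebra_simps)
  also have "\<dots> = fps_const p"
  proof (rule fps_ext)
    fix n
    show "fps_nth (pmf_fps (geometric_pmf p)
        - fps_const (1 - p) * (fps_X * pmf_fps (geometric_pmf p))) n = fps_nth (fps_const p) n"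
      by (cases n) (simp_all add: assms fps_X_mult_nth)
  qed
  finally show ?thesis .
qed

lemma ml_B_pmf_eq_map_Suc:
  "ml_B_pmf p a = map_pmf Suc (bind_pmf (geometric_pmf p) (iid_sum_pmf (sibuya_pmf a)))"
  by (simp add: ml_B_pmf_def map_bind_pmf)

lemma pmf_fps_ml_B:
  assumes "0 < p" "p \<le> 1" "0 < a" "a < 1"
  shows "pmf_fps (ml_B_pmf p a) * (1 - fps_const (1 - p) * pmf_fps (sibuya_pmf a))
    = fps_const p * fps_X"
proof -
  let ?S = "pmf_fps (sibuya_pmf a)" and ?G = "pmf_fps (geometric_pmf p)"
  have S0: "fps_nth ?S 0 = 0"
    by (simp add: pmf_sibuya_pmf assms)
  have "pmf_fps (ml_B_pmf p a) = fps_X * (?G oo ?S)"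
    using S0 by (simp add: ml_B_pmf_eq_map_Suc pmf_fps_compound pmf_fps_map_Suc)
  moreover have "1 - fps_const (1 - p) * ?S = (1 - fps_const (1 - p) * fps_X) oo ?S"
    using S0 by (simp add: fps_compose_sub_distrib fps_const_mult_apply_left[symmetric])
  ultimately show ?thesis
    using S0 pmf_fps_geometric[OF assms(1,2)]
    by (simp add: fps_compose_mult_distrib[symmetric] mult.commute)
qed

lemma fps_frac_diff_mult_pmf_fps_ml_B:
  assumes "0 < p" "p < 1" "0 < a" "a < 1"
  shows "fps_frac_diff a * pmf_fps (ml_B_pmf p a)
    = fps_const (p / (1 - p)) * (fps_X - pmf_fps (ml_B_pmf p a))"
proof -
  let ?d = "pmf_fps (ml_B_pmf p a)"
  have "?d * (1 - fps_const (1 - p) * (1 - fps_frac_diff a)) = fps_const p * fps_X"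
    using pmf_fps_ml_B[of p a] pmf_fps_sibuya[of a] assms by simp
  then have eq: "fps_const (1 - p) * (fps_frac_diff a * ?d) = fps_const p * (fps_X - ?d)"
    by (simp add: algebra_simps flip: fps_const_sub)
  have "fps_frac_diff a * ?d
      = fps_const (1 / (1 - p)) * (fps_const (1 - p) * (fps_frac_diff a * ?d))"
    using assms by (simp add: mult.assoc[symmetric] flip: fps_const_mult)
  also have "\<dots> = fps_const (p / (1 - p)) * (fps_X - ?d)"
    by (simp only: eq) (simp add: mult.assoc[symmetric] flip: fps_const_mult)
  finally show ?thesis .
qed

section \<open>Renewal counting processes with discrete interarrival times\<close>

lemma state_prob_neg: "t < 0 \<Longrightarrow> state_prob M J k t = 0"
  by (simp add: state_prob_def)

lemma Greatest_nat_eq_iff: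
  fixes P :: "nat \<Rightarrow> bool"
  assumes down: "\<And>m n. m \<le> n \<Longrightarrow> P n \<Longrightarrow> P m" and "P 0" "\<not> P N"
  shows "(GREATEST n. P n) = k \<longleftrightarrow> P k \<and> \<not> P (Suc k)"
proof -
  have bound: "\<forall>y. P y \<longrightarrow> y \<le> N"
    using down \<open>\<not> P N\<close> by (meson nat_le_linear)
  show ?thesis
  proof
    assume "(GREATEST n. P n) = k"
    then show "P k \<and> \<not> P (Suc k)"
      using GreatestI_nat[of P 0 N] Greatest_le_nat[of P "Suc k" N] \<open>P 0\<close> bound by auto
  next
    assume k: "P k \<and> \<not> P (Suc k)"
    show "(GREATEST n. P n) = k"
    proof (rule Greatest_equality)
      show "P k" using k ..
      show "y \<le> k" if "P y" for y
        using down[of "Suc k" y] that k by (meson not_less_eq_eq)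
    qed
  qed
qed

(* The first branch is the unspecified value of GREATEST on an unbounded set; for positive
   interarrival times it only occurs on a null set (AE_partial_sum_gt). *)
lemma count_B_eq_iff:
  "count_B J t w = k \<longleftrightarrow>
     (if \<forall>n. (\<Sum>i<n. J i w) \<le> t then (GREATEST n::nat. True) = k
      else (\<Sum>i<k. J i w) \<le> t \<and> t < (\<Sum>i<Suc k. J i w))"
proof (cases "\<forall>n. (\<Sum>i<n. J i w) \<le> t")
  case True
  then show ?thesis by (simp add: count_B_def)
next
  case False
  then obtain N where "\<not> (\<Sum>i<N. J i w) \<le> t" by auto
  moreover have "(\<Sum>i<m. J i w) \<le> t" if "m \<le> n" "(\<Sum>i<n. J i w) \<le> t" for m n
    using that sum_mono2[of "{..<n}" "{..<m}" "\<lambda>i. J i w"] by auto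
  ultimately have
    "count_B J t w = k \<longleftrightarrow> (\<Sum>i<k. J i w) \<le> t \<and> \<not> (\<Sum>i<Suc k. J i w) \<le> t"
    unfolding count_B_def by (intro Greatest_nat_eq_iff) auto
  then show ?thesis
    unfolding if_not_P[OF False] by (simp only: not_le)
qed

locale iid_renewal = prob_space +
  fixes J :: "nat \<Rightarrow> 'a \<Rightarrow> nat" and D :: "nat pmf"
  assumes indep_J: "indep_vars (\<lambda>_. count_space UNIV) J UNIV"
    and distr_J: "\<And>i n. prob {w \<in> space M. J i w = n} = pmf D n"
    and pmf_D_0: "pmf D 0 = 0"
begin

lemma measurable_J [measurable]: "J i \<in> M \<rightarrow>\<^sub>M count_space UNIV"
  using indep_J by (simp add: indep_vars_def)

lemma prob_J_partial_sum_joint: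
  "prob {w \<in> space M. J k w = m \<and> (\<Sum>i<k. J i w) = j}
    = prob {w \<in> space M. J k w = m} * prob {w \<in> space M. (\<Sum>i<k. J i w) = j}"
proof -
  have "indep_vars (\<lambda>_. borel) (\<lambda>i w. real (J i w)) UNIV"
    by (rule indep_vars_compose2[OF indep_J]) simp
  then have "indep_var borel (\<lambda>w. real (J k w)) borel (\<lambda>w. \<Sum>i<k. real (J i w))"
    by (intro indep_vars_sum) (auto intro: indep_vars_subset)
  then have "\<P>(w in M. real (J k w) \<in> {real m} \<and> (\<Sum>i<k. real (J i w)) \<in> {real j})
      = \<P>(w in M. real (J k w) \<in> {real m}) * \<P>(w in M. (\<Sum>i<k. real (J i w)) \<in> {real j})"
    by (rule prob_indep_random_variable) auto
  then show ?thesis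
    by (simp flip: of_nat_sum)
qed

lemma prob_partial_sum_eq:
  "prob {w \<in> space M. (\<Sum>i<k. J i w) = n} = fps_nth (pmf_fps D ^ k) n"
proof (induction k arbitrary: n)
  case 0
  show ?case by (cases "n = 0") (simp_all add: prob_space)
next
  case (Suc k)
  have "{w \<in> space M. (\<Sum>i<Suc k. J i w) = n}
      = (\<Union>j\<in>{0..n}. {w \<in> space M. J k w = n - j \<and> (\<Sum>i<k. J i w) = j})"
    by auto
  then have "prob {w \<in> space M. (\<Sum>i<Suc k. J i w) = n}
      = (\<Sum>j=0..n. prob {w \<in> space M. J k w = n - j \<and> (\<Sum>i<k. J i w) = j})"
    by (simp only:) (rule finite_measure_finite_Union, auto simp: disjoint_family_on_def)
  also have "\<dots> = (\<Sum>j=0..n. fps_nth (pmf_fps D ^ k) j * fps_nth (pmf_fps D) (n - j))"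
    by (intro sum.cong refl) (simp add: prob_J_partial_sum_joint distr_J Suc.IH)
  also have "\<dots> = fps_nth (pmf_fps D ^ Suc k) n"
    by (simp only: power_Suc2 fps_mult_nth)
  finally show ?case .
qed

lemma prob_partial_sum_le:
  "prob {w \<in> space M. (\<Sum>i<k. J i w) \<le> t} = (\<Sum>n\<le>t. fps_nth (pmf_fps D ^ k) n)"
proof -
  have "{w \<in> space M. (\<Sum>i<k. J i w) \<le> t}
      = (\<Union>n\<le>t. {w \<in> space M. (\<Sum>i<k. J i w) = n})"
    by auto
  then have "prob {w \<in> space M. (\<Sum>i<k. J i w) \<le> t}
      = (\<Sum>n\<le>t. prob {w \<in> space M. (\<Sum>i<k. J i w) = n})"
    by (simp only:) (rule finite_measure_finite_Union, auto simp: disjoint_family_on_def)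
  then show ?thesis
    by (simp add: prob_partial_sum_eq)
qed

lemma AE_partial_sum_gt: "AE w in M. t < (\<Sum>i<Suc t. J i w)"
proof -
  have "AE w in M. J i w \<noteq> 0" for i
  proof -
    have "{w \<in> space M. J i w = 0} \<in> sets M"
      by measurable
    then have "{w \<in> space M. J i w = 0} \<in> null_sets M"
      using distr_J[of i 0] pmf_D_0 by (intro null_setsI) (simp_all add: emeasure_eq_measure)
    from AE_not_in[OF this] AE_space show ?thesis
      by eventually_elim auto
  qed
  then have "AE w in M. \<forall>i. J i w \<noteq> 0"
    by (simp add: AE_all_countable)
  then show ?thesis
  proof (rule eventually_mono)
    fix w assume "\<forall>i. J i w \<noteq> 0"
    then have "(\<Sum>i<Suc t. 1) \<le> (\<Sum>i<Suc t. J i w)"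
      by (intro sum_mono) (simp add: Suc_le_eq)
    then show "t < (\<Sum>i<Suc t. J i w)" by simp
  qed
qed

lemma prob_count_B_eq:
  "prob {w \<in> space M. count_B J t w = k}
    = prob {w \<in> space M. (\<Sum>i<k. J i w) \<le> t} - prob {w \<in> space M. (\<Sum>i<Suc k. J i w) \<le> t}"
proof -
  define L where "L k = {w \<in> space M. (\<Sum>i<k. J i w) \<le> t}" for k
  have L_sets [measurable]: "L k \<in> sets M" for k
    unfolding L_def by measurable
  have "{w \<in> space M. count_B J t w = k}
      = (L k - L (Suc k)) \<union> (if (GREATEST n::nat. True) = k then (\<Inter>n. L n) else {})"
    unfolding L_def count_B_eq_iff
    by (auto simp: not_le simp del: sum.lessThan_Suc) (meson not_le)
  moreover have "AE w in M. w \<notin> (\<Inter>n. L n)"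
    using AE_partial_sum_gt[of t]
    by eventually_elim (auto simp: L_def not_le simp del: sum.lessThan_Suc)
  ultimately have "prob {w \<in> space M. count_B J t w = k} = prob (L k - L (Suc k))"
    by (intro measure_eq_AE) auto
  also have "\<dots> = prob (L k) - prob (L (Suc k))"
    by (rule finite_measure_Diff[OF L_sets L_sets]) (auto simp: L_def)
  finally show ?thesis by (simp add: L_def)
qed

lemma state_prob_fps:
  "(1 - fps_X) * fps_of_int_seq (state_prob M J k) = pmf_fps D ^ k - pmf_fps D ^ Suc k"
proof -
  have "fps_of_int_seq (state_prob M J k)
      = Abs_fps (\<lambda>t. \<Sum>n\<le>t. fps_nth (pmf_fps D ^ k - pmf_fps D ^ Suc k) n)"
    by (simp add: fps_of_int_seq_def state_prob_def prob_count_B_eq prob_partial_sum_le sum_subtractf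
        del: sum.lessThan_Suc)
  then show ?thesis
    using one_minus_X_mult_partial_sums[of "pmf_fps D ^ k - pmf_fps D ^ Suc k"] by (simp only:)
qed

lemma state_prob_0: "state_prob M J k 0 = (if k = 0 then 1 else 0)"
proof -
  have "fps_nth ((1 - fps_X) * fps_of_int_seq (state_prob M J k)) 0 = (if k = 0 then 1 else 0)"
    using pmf_D_0 by (simp add: state_prob_fps fps_nth_power_0)
  then show ?thesis
    by simp
qed

lemma frac_diff_state_prob_Suc:
  assumes symbol: "fps_frac_diff a * pmf_fps D = fps_const l * (fps_X - pmf_fps D)"
  shows "frac_diff a (state_prob M J (Suc k)) (int t)
    = - l * state_prob M J (Suc k) (int t) + l * state_prob M J k (int t - 1)"
proof -
  let ?d = "pmf_fps D" and ?G = "\<lambda>k. fps_of_int_seq (state_prob M J k)"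
  have "(1 - fps_X) * (fps_frac_diff a * ?G (Suc k))
      = fps_frac_diff a * ((1 - fps_X) * ?G (Suc k))"
    by (rule mult.left_commute)
  also have "\<dots> = fps_frac_diff a * ?d * (?d ^ k - ?d ^ Suc k)"
    by (simp only: state_prob_fps) (simp add: algebra_simps)
  also have "\<dots>
      = fps_const l * (fps_X * (?d ^ k - ?d ^ Suc k) - (?d ^ Suc k - ?d ^ Suc (Suc k)))"
    by (simp only: symbol) (simp add: algebra_simps)
  also have "\<dots> = (1 - fps_X) * (fps_const l * (fps_X * ?G k - ?G (Suc k)))"
    by (simp only: state_prob_fps[symmetric]) (simp add: algebra_simps)
  finally have eq: "fps_frac_diff a * ?G (Suc k) = fps_const l * (fps_X * ?G k - ?G (Suc k))"
    by simp
  have "frac_diff a (state_prob M J (Suc k)) (int t) = fps_nth (fps_frac_diff a * ?G (Suc k)) t"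
    by (rule frac_diff_eq_fps_nth) (rule state_prob_neg)
  also have "\<dots> = l * (state_prob M J k (int t - 1) - state_prob M J (Suc k) (int t))"
    by (simp add: eq fps_X_mult_fps_of_int_seq_nth state_prob_neg)
  finally show ?thesis
    by (simp add: algebra_simps)
qed

lemma frac_diff_state_prob_0:
  assumes symbol: "fps_frac_diff a * pmf_fps D = fps_const l * (fps_X - pmf_fps D)"
  shows "frac_diff a (state_prob M J 0) (int t) - (-1) ^ t * ((a - 1) gchoose t)
    = - l * state_prob M J 0 (int t) + l * (if t = 0 then 1 else 0)"
proof -
  let ?d = "pmf_fps D" and ?G = "fps_of_int_seq (state_prob M J 0)"
  have "(1 - fps_X) * (fps_frac_diff a * ?G - fps_frac_diff (a - 1))
      = fps_frac_diff a * ((1 - fps_X) * ?G) - (1 - fps_X) * fps_frac_diff (a - 1)"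
    by (simp add: algebra_simps)
  also have "\<dots> = - (fps_frac_diff a * ?d)"
    by (simp only: state_prob_fps one_minus_X_mult_fps_frac_diff) (simp add: algebra_simps)
  also have "\<dots> = fps_const l * ((1 - fps_X) - (1 - ?d))"
    by (simp only: symbol) (simp add: algebra_simps)
  also have "\<dots> = (1 - fps_X) * (fps_const l * (1 - ?G))"
    by (simp only: state_prob_fps[of 0, simplified, symmetric]) (simp add: algebra_simps)
  finally have eq: "fps_frac_diff a * ?G - fps_frac_diff (a - 1) = fps_const l * (1 - ?G)"
    by simp
  have "frac_diff a (state_prob M J 0) (int t) - (-1) ^ t * ((a - 1) gchoose t)
      = fps_nth (fps_frac_diff a * ?G - fps_frac_diff (a - 1)) t"
    by (simp add: frac_diff_eq_fps_nth state_prob_neg fps_frac_diff_def)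
  also have "\<dots> = l * ((if t = 0 then 1 else 0) - state_prob M J 0 (int t))"
    by (simp add: eq)
  finally show ?thesis
    by (simp add: algebra_simps)
qed

end

theorem mainTheorem8:
  fixes M :: "'w measure" and J :: "nat \<Rightarrow> 'w \<Rightarrow> nat"
    and p a :: real
  assumes "prob_space M"
    and "0 < p" "p < 1" "0 < a" "a < 1"
    and "prob_space.indep_vars M (\<lambda>_. count_space UNIV) J UNIV"
    and "\<And>i n. measure M {w \<in> space M. J i w = n} = pmf (ml_B_pmf p a) n"
  shows "(\<forall>k. state_prob M J k 0 = (if k = 0 then 1 else 0))
    \<and> (\<forall>k t. k \<ge> 1 \<longrightarrow>
          frac_diff a (state_prob M J k) (int t)
          = - (p / (1 - p)) * state_prob M J k (int t)
            + (p / (1 - p)) * state_prob M J (k - 1) (int t - 1))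
    \<and> (\<forall>t. frac_diff a (state_prob M J 0) (int t) - (-1) ^ t * ((a - 1) gchoose t)
          = - (p / (1 - p)) * state_prob M J 0 (int t)
            + (p / (1 - p)) * (if t = 0 then 1 else 0))"
proof -
  interpret iid_renewal M J "ml_B_pmf p a"
    using assms(1,6,7) by (intro iid_renewal.intro iid_renewal_axioms.intro)
      (simp_all add: ml_B_pmf_eq_map_Suc pmf_eq_0_set_pmf)
  have symbol: "fps_frac_diff a * pmf_fps (ml_B_pmf p a)
      = fps_const (p / (1 - p)) * (fps_X - pmf_fps (ml_B_pmf p a))"
    using assms by (intro fps_frac_diff_mult_pmf_fps_ml_B)
  have "frac_diff a (state_prob M J k) (int t)
      = - (p / (1 - p)) * state_prob M J k (int t) + (p / (1 - p)) * state_prob M J (k - 1) (int t - 1)"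
    if "k \<ge> 1" for k t
    using frac_diff_state_prob_Suc[OF symbol, of "k - 1" t] that by simp
  then show ?thesis
    using state_prob_0 frac_diff_state_prob_0[OF symbol] by blast
qed

end
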